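(* Let $D\ge3$ and $n=2^D-1$, with coordinates indexed by $\mathbb F_2^D\setminus\{0\}$. Let $C\subseteq\mathbb F_2^n$ be the span of the restrictions to $\mathbb F_2^D\setminus\{0\}$ of the evaluation vectors of $1,x_1,\dots,x_D$ (the punctured first-order Reed–Muller code). Let $H_X$ be the single all-ones row of length $n$ and let $H_Z$ be any matrix with $\mathrm{rs}(H_Z)=C^\perp$. Then $(H_X,H_Z)$ is a CSS code with $k=D$, $d_X=2^{D-1}-1$ and $d_Z=2$, and it is phantom.
   Context: The evaluation vector of a Boolean polynomial $f$ in $x_1,\dots,x_D$ is $(f(a))_a$. $C^\perp$ is the dual code with respect to the standard dot product. CSS conventions: a CSS code is specified by $H_X,H_Z$ over $\mathbb F_2$ with $H_XH_Z^T=0$; $k=n-\operatorname{rank}H_X-\operatorname{rank}H_Z$; $d_X=\min\{|v|:v\in\ker H_Z\setminus\mathrm{rs}(H_X)\}$, $d_Z=\min\{|v|:v\in\ker H_X\setminus\mathrm{rs}(H_Z)\}$, where $\mathrm{rs}$ is row space and $\ker M=\{v:Mv^T=0\}$. A CSS logical basis is $L_X,L_Z\in\mathbb F_2^{k\times n}$ with rows of $L_X$ in $\ker H_Z$, rows of $L_Z$ in $\ker H_X$, $L_XL_Z^T=I_k$. A permutation with matrix $P$ implements the logical CNOT circuit $A\in GL(k,\mathbb F_2)$ if $\mathrm{rs}(H_XP)=\mathrm{rs}(H_X)$, $\mathrm{rs}(H_ZP)=\mathrm{rs}(H_Z)$, rows of $L_XP-AL_X$ lie in $\mathrm{rs}(H_X)$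 and rows of $L_ZP-A^{-T}L_Z$ lie in $\mathrm{rs}(H_Z)$. The code is phantom if some CSS logical basis admits, for every ordered pair $a\ne b$ in $[k]$, a permutation implementing $I_k+E_{ab}$ ($E_{ab}$ the matrix unit). *)

theory Defs
  imports Main "HOL-Library.Z2"
begin

text \<open>Vectors over F2 indexed by a finite coordinate set I are functions
  'c => bit vanishing outside I.  A matrix with m rows is a function
  nat => ('c => bit) of which only rows 0..m-1 are used.\<close>

type_synonym 'c vect = "'c \<Rightarrow> bit"

definition vecs :: "'c set \<Rightarrow> 'c vect set" where
  "vecs I = {v. \<forall>j. j \<notin> I \<longrightarrow> v j = 0}"

definition dot :: "'c set \<Rightarrow> 'c vect \<Rightarrow> 'c vect \<Rightarrow> bit" where
  "dot I u v = (\<Sum>j\<in>I. u j * v j)"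

definition weight :: "'c set \<Rightarrow> 'c vect \<Rightarrow> nat" where
  "weight I v = card {j\<in>I. v j \<noteq> 0}"

definition span :: "'c vect set \<Rightarrow> 'c vect set" where
  "span S = {v. \<exists>T c. finite T \<and> T \<subseteq> S \<and> v = (\<lambda>j. \<Sum>u\<in>T. c u * u j)}"

definition dim :: "'c vect set \<Rightarrow> nat" where
  "dim V = (LEAST r. \<exists>S. finite S \<and> card S = r \<and> S \<subseteq> V \<and> span S = V)"

definition rowsp :: "nat \<Rightarrow> (nat \<Rightarrow> 'c vect) \<Rightarrow> 'c vect set" where
  "rowsp m H = span (H ` {..<m})"

definition rank :: "nat \<Rightarrow> (nat \<Rightarrow> 'c vect) \<Rightarrow> nat" where
  "rank m H = dim (rowsp m H)"

definition ker :: "'c set \<Rightarrow> nat \<Rightarrow> (nat \<Rightarrow> 'c vect) \<Rightarrow> 'c vect set" where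
  "ker I m H = {v \<in> vecs I. \<forall>i<m. dot I (H i) v = 0}"

definition dual :: "'c set \<Rightarrow> 'c vect set \<Rightarrow> 'c vect set" where
  "dual I C = {v \<in> vecs I. \<forall>c\<in>C. dot I c v = 0}"

definition css :: "'c set \<Rightarrow> nat \<Rightarrow> (nat \<Rightarrow> 'c vect) \<Rightarrow> nat \<Rightarrow> (nat \<Rightarrow> 'c vect) \<Rightarrow> bool" where
  "css I mX HX mZ HZ \<longleftrightarrow> finite I \<and> (\<forall>i<mX. HX i \<in> vecs I) \<and> (\<forall>i<mZ. HZ i \<in> vecs I)
     \<and> (\<forall>i<mX. \<forall>j<mZ. dot I (HX i) (HZ j) = 0)"

definition css_k :: "'c set \<Rightarrow> nat \<Rightarrow> (nat \<Rightarrow> 'c vect) \<Rightarrow> nat \<Rightarrow> (nat \<Rightarrow> 'c vect) \<Rightarrow> nat" where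
  "css_k I mX HX mZ HZ = card I - rank mX HX - rank mZ HZ"

definition css_dX :: "'c set \<Rightarrow> nat \<Rightarrow> (nat \<Rightarrow> 'c vect) \<Rightarrow> nat \<Rightarrow> (nat \<Rightarrow> 'c vect) \<Rightarrow> nat" where
  "css_dX I mX HX mZ HZ = Min (weight I ` (ker I mZ HZ - rowsp mX HX))"

definition css_dZ :: "'c set \<Rightarrow> nat \<Rightarrow> (nat \<Rightarrow> 'c vect) \<Rightarrow> nat \<Rightarrow> (nat \<Rightarrow> 'c vect) \<Rightarrow> nat" where
  "css_dZ I mX HX mZ HZ = Min (weight I ` (ker I mX HX - rowsp mZ HZ))"

definition css_basis :: "'c set \<Rightarrow> nat \<Rightarrow> (nat \<Rightarrow> 'c vect) \<Rightarrow> nat \<Rightarrow> (nat \<Rightarrow> 'c vect)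
    \<Rightarrow> nat \<Rightarrow> (nat \<Rightarrow> 'c vect) \<Rightarrow> (nat \<Rightarrow> 'c vect) \<Rightarrow> bool" where
  "css_basis I mX HX mZ HZ k LX LZ \<longleftrightarrow>
     (\<forall>a<k. LX a \<in> ker I mZ HZ \<and> LZ a \<in> ker I mX HX) \<and>
     (\<forall>a<k. \<forall>b<k. dot I (LX a) (LZ b) = (if a = b then 1 else 0))"

text \<open>Right action of the permutation matrix of a bijection s of I on a row vector.\<close>
definition permute :: "'c set \<Rightarrow> ('c \<Rightarrow> 'c) \<Rightarrow> 'c vect \<Rightarrow> 'c vect" where
  "permute I s v = (\<lambda>j. if j \<in> I then v (s j) else 0)"

definition idm :: "nat \<Rightarrow> nat \<Rightarrow> bit" where
  "idm a b = (if a = b then 1 else 0)"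

definition matrows :: "nat \<Rightarrow> (nat \<Rightarrow> nat \<Rightarrow> bit) \<Rightarrow> (nat \<Rightarrow> 'c vect) \<Rightarrow> nat \<Rightarrow> 'c vect" where
  "matrows k A L = (\<lambda>a j. \<Sum>b<k. A a b * L b j)"

text \<open>The permutation s implements the logical CNOT circuit A in GL(k,F2); B is A^{-1},
  so (\<lambda>a b. B b a) is A^{-T}.\<close>
definition implements :: "'c set \<Rightarrow> nat \<Rightarrow> (nat \<Rightarrow> 'c vect) \<Rightarrow> nat \<Rightarrow> (nat \<Rightarrow> 'c vect)
    \<Rightarrow> nat \<Rightarrow> (nat \<Rightarrow> 'c vect) \<Rightarrow> (nat \<Rightarrow> 'c vect) \<Rightarrow> ('c \<Rightarrow> 'c) \<Rightarrow> (nat \<Rightarrow> nat \<Rightarrow> bit) \<Rightarrow> bool" where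
  "implements I mX HX mZ HZ k LX LZ s A \<longleftrightarrow> bij_betw s I I \<and>
     (\<exists>B. (\<forall>a<k. \<forall>b<k. (\<Sum>c<k. A a c * B c b) = idm a b) \<and>
          (\<forall>a<k. \<forall>b<k. (\<Sum>c<k. B a c * A c b) = idm a b) \<and>
          rowsp mX (\<lambda>i. permute I s (HX i)) = rowsp mX HX \<and>
          rowsp mZ (\<lambda>i. permute I s (HZ i)) = rowsp mZ HZ \<and>
          (\<forall>a<k. permute I s (LX a) - matrows k A LX a \<in> rowsp mX HX) \<and>
          (\<forall>a<k. permute I s (LZ a) - matrows k (\<lambda>a b. B b a) LZ a \<in> rowsp mZ HZ))"

definition phantom :: "'c set \<Rightarrow> nat \<Rightarrow> (nat \<Rightarrow> 'c vect) \<Rightarrow> nat \<Rightarrow> (nat \<Rightarrow> 'c vect) \<Rightarrow> bool" where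
  "phantom I mX HX mZ HZ \<longleftrightarrow> (let k = css_k I mX HX mZ HZ in
     \<exists>LX LZ. css_basis I mX HX mZ HZ k LX LZ \<and>
       (\<forall>a<k. \<forall>b<k. a \<noteq> b \<longrightarrow>
          (\<exists>s. implements I mX HX mZ HZ k LX LZ s (\<lambda>i j. idm i j + (if i = a \<and> j = b then 1 else 0)))))"

definition coords :: "nat \<Rightarrow> bit list set" where
  "coords D = {a. length a = D \<and> a \<noteq> replicate D 0}"

definition evalv :: "nat \<Rightarrow> (bit list \<Rightarrow> bit) \<Rightarrow> bit list vect" where
  "evalv D f = (\<lambda>a. if a \<in> coords D then f a else 0)"

definition RM1p :: "nat \<Rightarrow> bit list vect set" where
  "RM1p D = span (insert (evalv D (\<lambda>_. 1)) ((\<lambda>i. evalv D (\<lambda>a. a ! i)) ` {..<D}))"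

end

theory Submission
  imports Defs "HOL-Library.Function_Algebras" "HOL.Vector_Spaces"
begin

text \<open>The code C consists of the affine functions c0 + c.x restricted to the nonzero points of
  F2^D.  The D + 1 nonzero points e_0, ..., e_(D-1), e_0 + e_1 form an affine basis, so a word of C
  is determined by its values there, and for every other point p the indicator of p plus the
  indicators of the basis points weighted by the affine coefficients of p is a word of C^perp.
  These n - D - 1 words form a basis of C^perp, which gives k = D and C^perp^perp = C, i.e.
  ker H_Z = C.  A nonconstant affine function vanishes on exactly half of F2^D, which gives d_X,
  and d_Z = 2 is attained by a word of weight 2 that is not in C^perp.  The logical operators
  are X_a = x_a and Z_b supported on four basis points; the transvection x_a := x_a + x_b permutes
  the nonzero points, fixes the all-ones row, preserves C and hence C^perp, and sends x_a to
  x_a + x_b, so it implements the CNOT from a to b.  All of this holds already for D >= 2.\<close>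

declare add_bit_eq_xor[simp del] mult_bit_eq_and[simp del]

section \<open>Vectors over F2\<close>

definition scale_vect :: "bit \<Rightarrow> 'c vect \<Rightarrow> 'c vect" where
  "scale_vect c v = (\<lambda>j. c * v j)"

lemma scale_vect_apply [simp]: "scale_vect c v j = c * v j"
  by (simp add: scale_vect_def)

interpretation vect: vector_space scale_vect
  by unfold_locales (auto simp: fun_eq_iff algebra_simps)

lemma sum_apply: "sum f A x = (\<Sum>a\<in>A. f a x)"
  by (induction A rule: infinite_finite_induct) auto

lemma span_eq_vect_span: "span S = vect.span S"
  unfolding span_def vect.span_explicit by (auto simp: sum_apply fun_eq_iff)

lemma rowsp_eq_vect_span: "rowsp m H = vect.span (H ` {..<m})"
  by (simp add: rowsp_def span_eq_vect_span)

lemma dim_eq_vect_dim: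
  assumes "finite B"
  shows "dim (vect.span B) = vect.dim (vect.span B)"
proof -
  obtain B' where B': "B' \<subseteq> vect.span B" "vect.independent B'" "vect.span B \<subseteq> vect.span B'"
    "card B' = vect.dim (vect.span B)"
    using vect.basis_exists by blast
  have "finite B'" using vect.independent_span_bound[OF assms B'(2)] B'(1) by blast
  moreover have "vect.span B' = vect.span B"
    using B'(1,3) vect.span_mono vect.span_span by (metis subset_antisym)
  ultimately show ?thesis
    unfolding dim_def span_eq_vect_span
  proof (intro Least_equality)
    fix r assume "\<exists>S. finite S \<and> card S = r \<and> S \<subseteq> vect.span B \<and> vect.span S = vect.span B"
    then obtain S where "finite S" "card S = r" "vect.span S = vect.span B" by blast
    then show "vect.dim (vect.span B) \<le> r"
      using vect.independent_span_bound[of S B'] B' by auto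
  qed (use B' in blast)
qed

lemma rowsp_member: "i < m \<Longrightarrow> H i \<in> rowsp m H"
  by (simp add: rowsp_eq_vect_span vect.span_base)

lemma zero_in_rowsp [simp]: "0 \<in> rowsp m H"
  by (simp add: rowsp_eq_vect_span vect.span_zero)

lemma rank_eq_vect_dim: "rank m H = vect.dim (rowsp m H)"
  unfolding rank_def rowsp_eq_vect_span by (rule dim_eq_vect_dim) simp

lemma vecs_subspace: "vect.subspace (vecs I)"
  by (auto simp: vect.subspace_def vecs_def)

lemma weight_le_card: "finite I \<Longrightarrow> weight I v \<le> card I"
  unfolding weight_def by (rule card_mono) auto

lemma dot_zero_left [simp]: "dot I 0 v = 0"
  by (simp add: dot_def)

lemma dot_zero_right [simp]: "dot I u 0 = 0"
  by (simp add: dot_def)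

lemma dot_commute: "dot I u v = dot I v u"
  by (simp add: dot_def mult.commute)

lemma dot_add_left: "dot I (u + v) w = dot I u w + dot I v w"
  by (simp add: dot_def sum.distrib distrib_right)

lemma dot_add_right: "dot I u (v + w) = dot I u v + dot I u w"
  by (simp add: dot_def sum.distrib distrib_left)

lemma dot_diff_left: "dot I (u - v) w = dot I u w - dot I v w"
  by (simp add: dot_def sum.distrib distrib_right)

lemma dot_diff_right: "dot I u (v - w) = dot I u v - dot I u w"
  by (simp add: dot_def sum.distrib distrib_left)

lemma dot_scale_left: "dot I (scale_vect c u) v = c * dot I u v"
  by (simp add: dot_def sum_distrib_left algebra_simps)

lemma dot_scale_right: "dot I u (scale_vect c v) = c * dot I u v"
  by (simp add: dot_def sum_distrib_left algebra_simps)

lemma dot_sum_right: "dot I u (sum f A) = (\<Sum>a\<in>A. dot I u (f a))"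
  by (simp add: dot_def sum_apply sum_distrib_left sum.swap[of _ I])

definition unit_vect :: "'c \<Rightarrow> 'c vect" where
  "unit_vect p = (\<lambda>q. if q = p then 1 else 0)"

lemma unit_vect_vecs: "p \<in> I \<Longrightarrow> unit_vect p \<in> vecs I"
  by (simp add: unit_vect_def vecs_def)

lemma dot_unit_vect: "finite I \<Longrightarrow> p \<in> I \<Longrightarrow> dot I u (unit_vect p) = u p"
  by (simp add: dot_def unit_vect_def if_distrib cong: if_cong)

lemma dual_subspace: "vect.subspace (dual I C)"
  using vecs_subspace[of I]
  by (auto simp: vect.subspace_def dual_def dot_add_right dot_scale_right)

lemma dual_vect_span: "dual I (vect.span G) = dual I G"
proof
  show "dual I (vect.span G) \<subseteq> dual I G"
    using vect.span_superset by (auto simp: dual_def)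
next
  show "dual I G \<subseteq> dual I (vect.span G)"
  proof
    fix v assume v: "v \<in> dual I G"
    have "dot I c v = 0" if "c \<in> vect.span G" for c
      using that
    proof (rule vect.span_induct)
      show "vect.subspace {c. dot I c v = 0}"
        by (auto simp: vect.subspace_def dot_add_left dot_scale_left)
    qed (use v in \<open>auto simp: dual_def\<close>)
    then show "v \<in> dual I (vect.span G)" using v by (auto simp: dual_def)
  qed
qed

lemma ker_eq_dual_rowsp: "ker I m H = dual I (rowsp m H)"
  unfolding rowsp_eq_vect_span dual_vect_span by (auto simp: ker_def dual_def)

lemma rowsp_single: "rowsp 1 (\<lambda>_. v) = {0, v}"
proof -
  have "rowsp 1 (\<lambda>_. v) = range (\<lambda>c. scale_vect c v)"
    by (simp add: rowsp_eq_vect_span lessThan_Suc vect.span_singleton)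
  also have "\<dots> = {0, v}"
    using bit_not_zero_iff by (auto simp: fun_eq_iff image_iff)
  finally show ?thesis .
qed

lemma rank_single: "v \<noteq> 0 \<Longrightarrow> rank 1 (\<lambda>_. v) = 1"
  using vect.dim_span_eq_card_independent[of "{v}"]
  by (simp add: rank_eq_vect_dim rowsp_eq_vect_span lessThan_Suc)

lemma ker_single: "ker I 1 (\<lambda>_. u) = {v \<in> vecs I. dot I u v = 0}"
  by (simp add: ker_def)

lemma permute_vecs: "permute I s v \<in> vecs I"
  by (simp add: permute_def vecs_def)

lemma permute_add: "permute I s (u + v) = permute I s u + permute I s v"
  by (simp add: permute_def fun_eq_iff)

lemma permute_scale: "permute I s (scale_vect c u) = scale_vect c (permute I s u)"
  by (simp add: permute_def fun_eq_iff)

lemma permute_zero: "permute I s 0 = 0"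
  by (simp add: permute_def fun_eq_iff)

lemma permute_vect_span:
  assumes "v \<in> vect.span S"
  shows "permute I s v \<in> vect.span (permute I s ` S)"
proof -
  have "vect.subspace {v. permute I s v \<in> vect.span (permute I s ` S)}"
    by (auto simp: vect.subspace_def permute_add permute_scale permute_zero
        intro: vect.span_add vect.span_scale vect.span_zero)
  then have "vect.span S \<subseteq> {v. permute I s v \<in> vect.span (permute I s ` S)}"
    by (rule vect.span_minimal[rotated]) (auto intro: vect.span_base)
  then show ?thesis using assms by auto
qed

locale involution_on =
  fixes I :: "'c set" and s :: "'c \<Rightarrow> 'c"
  assumes maps_to: "x \<in> I \<Longrightarrow> s x \<in> I"
    and involutive: "x \<in> I \<Longrightarrow> s (s x) = x"
begin

lemma bij: "bij_betw s I I"
  by (rule bij_betw_byWitness[where f' = s]) (auto intro: maps_to involutive)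

lemma permute_permute: "v \<in> vecs I \<Longrightarrow> permute I s (permute I s v) = v"
  by (auto simp: permute_def fun_eq_iff vecs_def maps_to involutive)

lemma dot_permute: "dot I (permute I s u) v = dot I u (permute I s v)"
proof -
  have "dot I (permute I s u) v = (\<Sum>j\<in>I. u (s j) * v (s (s j)))"
    unfolding dot_def permute_def by (intro sum.cong) (auto simp: involutive)
  also have "\<dots> = (\<Sum>j\<in>I. u j * v (s j))"
    by (rule sum.reindex_bij_betw[OF bij, of "\<lambda>j. u j * v (s j)"])
  also have "\<dots> = dot I u (permute I s v)"
    unfolding dot_def permute_def by (intro sum.cong) auto
  finally show ?thesis .
qed

lemma rowsp_permute:
  assumes "rowsp m H \<subseteq> vecs I" and "\<And>v. v \<in> rowsp m H \<Longrightarrow> permute I s v \<in> rowsp m H"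
  shows "rowsp m (\<lambda>i. permute I s (H i)) = rowsp m H"
proof
  show "rowsp m (\<lambda>i. permute I s (H i)) \<subseteq> rowsp m H"
    unfolding rowsp_eq_vect_span[of m "\<lambda>i. permute I s (H i)"]
    by (rule vect.span_minimal) (use assms(2) rowsp_member in \<open>auto simp: rowsp_eq_vect_span\<close>)
next
  show "rowsp m H \<subseteq> rowsp m (\<lambda>i. permute I s (H i))"
  proof
    fix v assume v: "v \<in> rowsp m H"
    then have "permute I s (permute I s v) \<in> vect.span (permute I s ` H ` {..<m})"
      using assms(2) by (intro permute_vect_span) (simp add: rowsp_eq_vect_span)
    then show "v \<in> rowsp m (\<lambda>i. permute I s (H i))"
      using v assms(1) by (auto simp: permute_permute rowsp_eq_vect_span image_image)
  qed
qed

lemma permute_dual: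
  assumes "\<And>c. c \<in> C \<Longrightarrow> permute I s c \<in> C" and "v \<in> dual I C"
  shows "permute I s v \<in> dual I C"
  using assms by (auto simp: dual_def permute_vecs dot_permute[symmetric])

end

section \<open>The punctured first-order Reed--Muller code\<close>

abbreviation ones_vect :: "nat \<Rightarrow> bit list vect" where
  "ones_vect D \<equiv> evalv D (\<lambda>_. 1)"

abbreviation coord_vect :: "nat \<Rightarrow> nat \<Rightarrow> bit list vect" where
  "coord_vect D i \<equiv> evalv D (\<lambda>a. a ! i)"

lemma bit_UNIV: "(UNIV :: bit set) = {0, 1}"
  using bit_not_zero_iff by auto

lemma finite_bit_lists: "finite {a :: bit list. length a = D}"
proof -
  have "finite (UNIV :: bit set)" by (simp add: bit_UNIV)
  then show ?thesis using finite_lists_length_eq[of "UNIV :: bit set" D] by simp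
qed

lemma card_bit_lists: "card {a :: bit list. length a = D} = 2 ^ D"
proof -
  have "finite (UNIV :: bit set)" "card (UNIV :: bit set) = 2" by (simp_all add: bit_UNIV)
  then show ?thesis using card_lists_length_eq[of "UNIV :: bit set" D] by simp
qed

lemma finite_coords [simp]: "finite (coords D)"
  by (rule finite_subset[OF _ finite_bit_lists[of D]]) (auto simp: coords_def)

lemma evalv_vecs [simp]: "evalv D f \<in> vecs (coords D)"
  by (simp add: vecs_def evalv_def)

lemma dot_evalv: "dot (coords D) (evalv D f) v = (\<Sum>a\<in>coords D. f a * v a)"
  by (simp add: dot_def evalv_def)

lemma RM1p_eq_vect_span: "RM1p D = vect.span (insert (ones_vect D) (coord_vect D ` {..<D}))"
  by (simp add: RM1p_def span_eq_vect_span)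

lemma ones_vect_RM1p: "ones_vect D \<in> RM1p D"
  unfolding RM1p_eq_vect_span by (rule vect.span_base) simp

lemma coord_vect_RM1p: "i < D \<Longrightarrow> coord_vect D i \<in> RM1p D"
  unfolding RM1p_eq_vect_span by (rule vect.span_base) simp

lemma RM1p_subset_vecs: "RM1p D \<subseteq> vecs (coords D)"
  unfolding RM1p_eq_vect_span by (rule vect.span_minimal[OF _ vecs_subspace]) auto

lemma mem_dual_RM1p_iff:
  "v \<in> dual (coords D) (RM1p D) \<longleftrightarrow> v \<in> vecs (coords D) \<and> dot (coords D) (ones_vect D) v = 0
     \<and> (\<forall>i<D. dot (coords D) (coord_vect D i) v = 0)"
  unfolding RM1p_eq_vect_span dual_vect_span by (auto simp: dual_def)

definition lin_form :: "nat \<Rightarrow> (nat \<Rightarrow> bit) \<Rightarrow> bit list \<Rightarrow> bit" where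
  "lin_form D c a = (\<Sum>i<D. c i * a ! i)"

definition affine_vect :: "nat \<Rightarrow> bit \<Rightarrow> (nat \<Rightarrow> bit) \<Rightarrow> bit list vect" where
  "affine_vect D c0 c = evalv D (\<lambda>a. c0 + lin_form D c a)"

lemma affine_vect_RM1p: "affine_vect D c0 c \<in> RM1p D"
proof -
  have "affine_vect D c0 c = scale_vect c0 (ones_vect D) + (\<Sum>i<D. scale_vect (c i) (coord_vect D i))"
    by (auto simp: fun_eq_iff affine_vect_def lin_form_def evalv_def sum_apply)
  also have "\<dots> \<in> RM1p D"
    unfolding RM1p_eq_vect_span
    by (intro vect.span_add vect.span_sum vect.span_scale vect.span_base) auto
  finally show ?thesis .
qed

lemma RM1p_iff_affine: "v \<in> RM1p D \<longleftrightarrow> (\<exists>c0 c. v = affine_vect D c0 c)"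
proof
  let ?A = "{v. \<exists>c0 c. v = affine_vect D c0 c}"
  have subspace: "vect.subspace ?A"
    unfolding vect.subspace_def
  proof (intro conjI ballI allI)
    show "0 \<in> ?A"
      by (auto simp: affine_vect_def lin_form_def evalv_def fun_eq_iff intro!: exI[of _ 0] exI[of _ "\<lambda>_. 0"])
  next
    fix x y assume "x \<in> ?A" "y \<in> ?A"
    then obtain a0 a b0 b where "x = affine_vect D a0 a" "y = affine_vect D b0 b" by auto
    then show "x + y \<in> ?A"
      by (auto simp: affine_vect_def lin_form_def evalv_def fun_eq_iff sum.distrib distrib_right
          add_ac intro!: exI[of _ "a0 + b0"] exI[of _ "\<lambda>i. a i + b i"])
  next
    fix c x assume "x \<in> ?A"
    then obtain a0 a where "x = affine_vect D a0 a" by auto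
    then show "scale_vect c x \<in> ?A"
      by (auto simp: affine_vect_def lin_form_def evalv_def fun_eq_iff sum_distrib_left
          distrib_left mult_ac intro!: exI[of _ "c * a0"] exI[of _ "\<lambda>i. c * a i"])
  qed
  have "coord_vect D i = affine_vect D 0 (\<lambda>j. if j = i then 1 else 0)" if "i < D" for i
  proof -
    have "lin_form D (\<lambda>j. if j = i then 1 else 0) a = (\<Sum>j<D. if j = i then a ! j else 0)" for a
      unfolding lin_form_def by (intro sum.cong) auto
    then show ?thesis using that by (simp add: affine_vect_def)
  qed
  moreover have "ones_vect D = affine_vect D 1 (\<lambda>_. 0)"
    by (simp add: affine_vect_def lin_form_def)
  ultimately have "insert (ones_vect D) (coord_vect D ` {..<D}) \<subseteq> ?A"
    by blast
  then have "RM1p D \<subseteq> ?A"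
    unfolding RM1p_eq_vect_span using subspace by (rule vect.span_minimal)
  then show "v \<in> RM1p D \<Longrightarrow> \<exists>c0 c. v = affine_vect D c0 c" by auto
qed (auto simp: affine_vect_RM1p)

lemma card_lin_form_level:
  assumes j: "j < D" "c j = 1"
  shows "card {a. length a = D \<and> lin_form D c a = e} = 2 ^ (D - 1)"
proof -
  define L where "L e = {a. length a = D \<and> lin_form D c a = e}" for e
  define flip where "flip a = a[j := a ! j + 1]" for a :: "bit list"
  have lin_flip: "lin_form D c (flip a) = lin_form D c a + 1" if "length a = D" for a
  proof -
    have "lin_form D c (flip a) = (\<Sum>i<D. c i * a ! i + (if i = j then 1 else 0))"
      unfolding lin_form_def flip_def using that j
      by (intro sum.cong) (auto simp: nth_list_update distrib_left)
    then show ?thesis using j by (simp add: sum.distrib lin_form_def)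
  qed
  have "bij_betw flip (L 0) (L 1)"
    by (rule bij_betw_byWitness[where f' = flip])
      (use j lin_flip in \<open>auto simp: L_def flip_def add.assoc\<close>)
  then have same: "card (L 0) = card (L 1)" by (rule bij_betw_same_card)
  have "L 0 \<union> L 1 = {a. length a = D}" "L 0 \<inter> L 1 = {}"
    using bit_not_zero_iff by (auto simp: L_def)
  moreover have "finite (L e)" for e
    by (rule finite_subset[OF _ finite_bit_lists[of D]]) (auto simp: L_def)
  ultimately have "card (L 0) + card (L 1) = 2 ^ D"
    using card_Un_disjoint card_bit_lists by metis
  moreover have "(2::nat) ^ D = 2 * 2 ^ (D - 1)"
    using j by (cases D) auto
  ultimately have "card (L e) = 2 ^ (D - 1)" for e
    using same by (cases e) auto
  then show ?thesis by (simp add: L_def)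
qed

lemma weight_affine_vect:
  assumes j: "j < D" "c j = 1"
  shows "weight (coords D) (affine_vect D c0 c) = (if c0 = 0 then 2 ^ (D - 1) else 2 ^ (D - 1) - 1)"
proof -
  have zero: "lin_form D c (replicate D 0) = 0"
    by (simp add: lin_form_def)
  have add_eq_one_iff: "c0 + x = 1 \<longleftrightarrow> x = c0 + 1" for x :: bit
    by (cases c0; cases x) auto
  have "{a \<in> coords D. affine_vect D c0 c a \<noteq> 0} = {a. length a = D \<and> lin_form D c a = c0 + 1}
      - {replicate D 0}"
    by (auto simp: coords_def affine_vect_def evalv_def add_eq_one_iff)
  moreover have "finite {a. length a = D \<and> lin_form D c a = c0 + 1}"
    by (rule finite_subset[OF _ finite_bit_lists[of D]]) auto
  ultimately show ?thesis
    using card_lin_form_level[of j D c, OF j]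
    by (cases c0) (simp_all add: weight_def card_Diff_singleton_if zero)
qed

text \<open>Basis point k is e_k for k < D and e_0 + e_1 for k = D: an affine basis of F2^D that
  avoids the punctured point 0.\<close>

definition basis_point :: "nat \<Rightarrow> nat \<Rightarrow> bit list" where
  "basis_point D k = map (\<lambda>j. if j = k \<or> (k = D \<and> j < 2) then 1 else 0) [0..<D]"

definition basis_points :: "nat \<Rightarrow> bit list set" where
  "basis_points D = basis_point D ` {..D}"

lemma basis_point_nth:
  "j < D \<Longrightarrow> basis_point D k ! j = (if j = k \<or> (k = D \<and> j < 2) then 1 else 0)"
  by (simp add: basis_point_def)

lemma basis_point_coords: "2 \<le> D \<Longrightarrow> k \<le> D \<Longrightarrow> basis_point D k \<in> coords D"
proof -
  assume "2 \<le> D" "k \<le> D"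
  then have "basis_point D k ! (if k < D then k else 0) \<noteq> replicate D 0 ! (if k < D then k else 0)"
    by (auto simp: basis_point_nth)
  then show ?thesis by (auto simp: coords_def basis_point_def)
qed

lemma basis_points_subset: "2 \<le> D \<Longrightarrow> basis_points D \<subseteq> coords D"
  by (auto simp: basis_points_def basis_point_coords)

lemma inj_on_basis_point: assumes "2 \<le> D" shows "inj_on (basis_point D) {..D}"
proof (rule inj_onI)
  fix k l assume k: "k \<in> {..D}" and l: "l \<in> {..D}" and eq: "basis_point D k = basis_point D l"
  show "k = l"
  proof (rule ccontr)
    assume "k \<noteq> l"
    define j where "j = (if k < D \<and> l < D then k else if k = D then (if l \<ge> 2 then 0 else 1 - l)
      else (if k \<ge> 2 then 0 else 1 - k))"
    have "j < D" using assms k l by (auto simp: j_def)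
    moreover have "basis_point D k ! j \<noteq> basis_point D l ! j"
      using \<open>k \<noteq> l\<close> k l assms \<open>j < D\<close> by (auto simp: basis_point_nth j_def split: if_splits) presburger+
    ultimately show False using eq by simp
  qed
qed

lemma card_basis_points: "2 \<le> D \<Longrightarrow> card (basis_points D) = D + 1"
  using card_image[OF inj_on_basis_point] by (simp add: basis_points_def)

lemma lessThan_inter_less_two: "2 \<le> D \<Longrightarrow> {k. k < D \<and> k < 2} = {0, 1 :: nat}"
  by auto

lemma sum_pairs_vanish:
  fixes D :: nat
  assumes "2 \<le> D"
  shows "(\<Sum>k<D. if k < 2 then c else 0) = (0::bit)"
  using assms by (simp add: sum.inter_filter[symmetric] lessThan_def lessThan_inter_less_two)

lemma sum_atMost_eq_lessThan_plus: "(\<Sum>k\<le>(D::nat). f k) = (\<Sum>k<D. f k) + (f D :: 'a :: comm_monoid_add)"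
proof -
  have "{..D} = insert D {..<D}" by auto
  then show ?thesis by (simp add: add.commute)
qed

lemma sum_basis_point_nth:
  assumes "i < D"
  shows "(\<Sum>k\<le>D. basis_point D k ! i * y k) = y i + (if i < 2 then y D else (0::bit))"
proof -
  have "(\<Sum>k<D. basis_point D k ! i * y k) = (\<Sum>k<D. if k = i then y k else 0)"
    using assms by (intro sum.cong) (auto simp: basis_point_nth)
  then show ?thesis using assms by (simp add: sum_atMost_eq_lessThan_plus basis_point_nth)
qed

lemma sum_coords_basis_points:
  assumes "2 \<le> D" and "\<And>q. q \<in> coords D - basis_points D \<Longrightarrow> h q = 0"
  shows "(\<Sum>q\<in>coords D. h q) = (\<Sum>k\<le>D. h (basis_point D k))"
proof -
  have "(\<Sum>q\<in>coords D. h q) = (\<Sum>q\<in>basis_points D. h q)"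
    by (rule sum.mono_neutral_right) (use assms basis_points_subset in auto)
  also have "\<dots> = (\<Sum>k\<le>D. h (basis_point D k))"
    unfolding basis_points_def by (rule sum.reindex[OF inj_on_basis_point[OF assms(1)], unfolded comp_def])
  finally show ?thesis .
qed

lemma lin_form_basis_point:
  assumes "2 \<le> D" "k \<le> D"
  shows "lin_form D c (basis_point D k) = (if k < D then c k else c 0 + c 1)"
proof (cases "k < D")
  case True
  have "lin_form D c (basis_point D k) = (\<Sum>i<D. if i = k then c i else 0)"
    unfolding lin_form_def using True by (intro sum.cong) (auto simp: basis_point_nth)
  then show ?thesis using True by simp
next
  case False
  then have "lin_form D c (basis_point D k) = (\<Sum>i<D. if i < 2 then c i else 0)"
    unfolding lin_form_def using assms by (intro sum.cong) (auto simp: basis_point_nth)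
  then show ?thesis
    using False assms by (simp add: sum.inter_filter[symmetric] lessThan_def lessThan_inter_less_two)
qed

subsection \<open>The dual code\<close>

lemma dual_RM1p_eq_zero:
  assumes D: "2 \<le> D" and v: "v \<in> dual (coords D) (RM1p D)"
    and off: "\<And>q. q \<in> coords D - basis_points D \<Longrightarrow> v q = 0"
  shows "v = 0"
proof -
  define y where "y k = v (basis_point D k)" for k
  have v': "v \<in> vecs (coords D)" "dot (coords D) (ones_vect D) v = 0"
    "\<And>i. i < D \<Longrightarrow> dot (coords D) (coord_vect D i) v = 0"
    using v by (auto simp: mem_dual_RM1p_iff)
  have y_lt: "y i = (if i < 2 then y D else 0)" if "i < D" for i
  proof -
    have "0 = (\<Sum>a\<in>coords D. a ! i * v a)" using v'(3)[OF that] by (simp add: dot_evalv)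
    also have "\<dots> = (\<Sum>k\<le>D. basis_point D k ! i * y k)"
      unfolding y_def by (rule sum_coords_basis_points[OF D]) (use off in auto)
    also have "\<dots> = y i + (if i < 2 then y D else 0)" by (rule sum_basis_point_nth[OF that])
    finally show ?thesis by (cases "y i"; cases "y D"; auto split: if_splits)
  qed
  have "0 = (\<Sum>a\<in>coords D. v a)" using v'(2) by (simp add: dot_evalv)
  also have "\<dots> = (\<Sum>k\<le>D. y k)"
    unfolding y_def by (rule sum_coords_basis_points[OF D]) (use off in auto)
  also have "\<dots> = y D"
    using y_lt sum_pairs_vanish[OF D, of "y D"] by (simp add: sum_atMost_eq_lessThan_plus)
  finally have "y k = 0" if "k \<le> D" for k
    using y_lt that by (cases "k = D") auto
  then have "v q = 0" for q
    using v'(1) off[of q] by (cases "q \<in> basis_points D") (auto simp: vecs_def basis_points_def y_def)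
  then show "v = 0" by auto
qed

text \<open>The coefficients of \<open>p\<close> as an affine combination of the basis points.\<close>

definition affine_coeff :: "nat \<Rightarrow> bit list \<Rightarrow> nat \<Rightarrow> bit" where
  "affine_coeff D p k = (let t = 1 + (\<Sum>i<D. p ! i) in
     if k < D then p ! k + (if k < 2 then t else 0) else t)"

definition dual_word :: "nat \<Rightarrow> bit list \<Rightarrow> bit list vect" where
  "dual_word D p = unit_vect p + (\<Sum>k\<le>D. scale_vect (affine_coeff D p k) (unit_vect (basis_point D k)))"

lemma dual_word_vecs: "2 \<le> D \<Longrightarrow> p \<in> coords D \<Longrightarrow> dual_word D p \<in> vecs (coords D)"
  unfolding dual_word_def
  by (intro vect.subspace_add[OF vecs_subspace] vect.subspace_sum[OF vecs_subspace]
      vect.subspace_scale[OF vecs_subspace] unit_vect_vecs basis_point_coords) auto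

lemma dot_dual_word:
  assumes "2 \<le> D" "p \<in> coords D"
  shows "dot (coords D) u (dual_word D p) = u p + (\<Sum>k\<le>D. affine_coeff D p k * u (basis_point D k))"
  unfolding dual_word_def dot_add_right dot_sum_right dot_scale_right
  using assms basis_point_coords[OF assms(1)] by (simp add: dot_unit_vect)

lemma dual_word_apply: "q \<notin> basis_points D \<Longrightarrow> dual_word D p q = unit_vect p q"
  by (auto simp: dual_word_def sum_apply unit_vect_def basis_points_def intro!: sum.neutral)

lemma dual_word_dual:
  assumes D: "2 \<le> D" and p: "p \<in> coords D"
  shows "dual_word D p \<in> dual (coords D) (RM1p D)"
  unfolding mem_dual_RM1p_iff
proof (intro conjI allI impI)
  show "dual_word D p \<in> vecs (coords D)" by (rule dual_word_vecs[OF D p])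
next
  have "(\<Sum>k<D. affine_coeff D p k)
      = (\<Sum>k<D. p ! k) + (\<Sum>k<D. if k < 2 then 1 + (\<Sum>i<D. p ! i) else 0)"
    by (simp add: affine_coeff_def Let_def sum.distrib)
  then have "(\<Sum>k<D. affine_coeff D p k) = (\<Sum>k<D. p ! k)"
    using sum_pairs_vanish[OF D] by simp
  then have "(\<Sum>k\<le>D. affine_coeff D p k) = 1"
    by (simp add: sum_atMost_eq_lessThan_plus affine_coeff_def add.assoc[symmetric])
  then show "dot (coords D) (ones_vect D) (dual_word D p) = 0"
    using p basis_point_coords[OF D] by (simp add: dot_dual_word[OF D p] evalv_def)
next
  fix i assume i: "i < D"
  have "(\<Sum>k\<le>D. affine_coeff D p k * basis_point D k ! i) = p ! i"
    using sum_basis_point_nth[OF i, of "affine_coeff D p"] i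
    by (simp add: mult.commute affine_coeff_def Let_def add.assoc)
  then show "dot (coords D) (coord_vect D i) (dual_word D p) = 0"
    using p basis_point_coords[OF D] by (simp add: dot_dual_word[OF D p] evalv_def)
qed

lemma dual_RM1p_eq_span:
  assumes D: "2 \<le> D"
  shows "dual (coords D) (RM1p D) = vect.span (dual_word D ` (coords D - basis_points D))"
proof
  show "vect.span (dual_word D ` (coords D - basis_points D)) \<subseteq> dual (coords D) (RM1p D)"
    by (rule vect.span_minimal[OF _ dual_subspace]) (use dual_word_dual[OF D] in auto)
next
  show "dual (coords D) (RM1p D) \<subseteq> vect.span (dual_word D ` (coords D - basis_points D))"
  proof
    fix v assume v: "v \<in> dual (coords D) (RM1p D)"
    define u where "u = (\<Sum>p\<in>coords D - basis_points D. scale_vect (v p) (dual_word D p))"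
    have "u \<in> dual (coords D) (RM1p D)"
      unfolding u_def
      by (intro vect.subspace_sum[OF dual_subspace] vect.subspace_scale[OF dual_subspace]
          dual_word_dual[OF D]) auto
    then have "v - u = 0"
    proof (intro dual_RM1p_eq_zero[OF D] vect.subspace_diff[OF dual_subspace v])
      fix q assume q: "q \<in> coords D - basis_points D"
      have "u q = (\<Sum>p\<in>coords D - basis_points D. v p * unit_vect p q)"
        unfolding u_def sum_apply using q by (simp add: dual_word_apply)
      also have "\<dots> = v q"
        using q by (simp add: unit_vect_def if_distrib[of "(*) _"] cong: if_cong)
      finally show "(v - u) q = 0" by simp
    qed
    moreover have "u \<in> vect.span (dual_word D ` (coords D - basis_points D))"
      unfolding u_def by (intro vect.span_sum vect.span_scale vect.span_base imageI)
    ultimately show "v \<in> vect.span (dual_word D ` (coords D - basis_points D))" by simp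
  qed
qed

lemma dual_word_eq_iff:
  "p \<notin> basis_points D \<Longrightarrow> q \<notin> basis_points D \<Longrightarrow> dual_word D p = dual_word D q \<longleftrightarrow> p = q"
  by (metis dual_word_apply unit_vect_def zero_neq_one)

lemma independent_dual_words: "vect.independent (dual_word D ` (coords D - basis_points D))"
  unfolding vect.dependent_explicit
proof clarify
  fix T u v
  assume T: "finite T" "T \<subseteq> dual_word D ` (coords D - basis_points D)"
    and sum: "(\<Sum>w\<in>T. scale_vect (u w) w) = 0" and v: "v \<in> T" "u v \<noteq> 0"
  obtain p where p: "p \<in> coords D - basis_points D" "v = dual_word D p" using T v by auto
  have "0 = (\<Sum>w\<in>T. scale_vect (u w) w) p" using sum by simp
  also have "\<dots> = (\<Sum>w\<in>T. if w = v then u w else 0)"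
    unfolding sum_apply
  proof (rule sum.cong[OF refl])
    fix w assume "w \<in> T"
    then obtain q where q: "q \<in> coords D - basis_points D" "w = dual_word D q" using T by auto
    then show "scale_vect (u w) w p = (if w = v then u w else 0)"
      using p dual_word_eq_iff[of q D p] by (auto simp: dual_word_apply unit_vect_def)
  qed
  also have "\<dots> = u v" using T v by simp
  finally show False using v by simp
qed

lemma dim_dual_RM1p:
  assumes D: "2 \<le> D"
  shows "vect.dim (dual (coords D) (RM1p D)) = card (coords D) - (D + 1)"
proof -
  have "inj_on (dual_word D) (coords D - basis_points D)"
    by (auto intro!: inj_onI simp: dual_word_eq_iff)
  then show ?thesis
    unfolding dual_RM1p_eq_span[OF D] vect.dim_span_eq_card_independent[OF independent_dual_words]
    using basis_points_subset[OF D] card_basis_points[OF D]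
    by (simp add: card_image card_Diff_subset finite_subset)
qed

lemma dual_dual_RM1p:
  assumes D: "2 \<le> D"
  shows "dual (coords D) (dual (coords D) (RM1p D)) = RM1p D"
proof
  show "RM1p D \<subseteq> dual (coords D) (dual (coords D) (RM1p D))"
    using RM1p_subset_vecs by (auto simp: dual_def dot_commute)
next
  show "dual (coords D) (dual (coords D) (RM1p D)) \<subseteq> RM1p D"
  proof
    fix v assume v: "v \<in> dual (coords D) (dual (coords D) (RM1p D))"
    define y where "y k = v (basis_point D k)" for k
    define c0 where "c0 = y 0 + y 1 + y D"
    define f where "f = affine_vect D c0 (\<lambda>i. y i + c0)"
    have f: "f \<in> RM1p D" unfolding f_def by (rule affine_vect_RM1p)
    have "f (basis_point D k) = y k" if "k \<le> D" for k
    proof -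
      have "f (basis_point D k) = c0 + (if k < D then y k + c0 else y 0 + c0 + (y 1 + c0))"
        using basis_point_coords[OF D that] lin_form_basis_point[OF D that]
        by (simp add: f_def affine_vect_def evalv_def)
      then show ?thesis
        using that by (cases "k < D"; cases "y 0"; cases "y 1"; cases "y D"; cases "y k")
          (auto simp: c0_def)
    qed
    then have on_basis: "(v - f) q = 0" if "q \<in> basis_points D" for q
      using that by (auto simp: basis_points_def y_def)
    have off_basis: "(v - f) p = 0" if p: "p \<in> coords D - basis_points D" for p
    proof -
      have "dual_word D p \<in> dual (coords D) (RM1p D)" using dual_word_dual[OF D] p by simp
      then have "dot (coords D) (dual_word D p) v = 0" "dot (coords D) f (dual_word D p) = 0"
        using v f by (auto simp: dual_def)
      then have "dot (coords D) (v - f) (dual_word D p) = 0"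
        by (simp add: dot_commute[of _ "dual_word D p"] dot_diff_left)
      moreover have "dot (coords D) (v - f) (dual_word D p) = (v - f) p"
        using dot_dual_word[OF D, of p "v - f"] on_basis p basis_point_coords[OF D]
        by (simp add: basis_points_def)
      ultimately show ?thesis by simp
    qed
    have "v - f \<in> vecs (coords D)"
      using v f RM1p_subset_vecs by (intro vect.subspace_diff[OF vecs_subspace]) (auto simp: dual_def)
    then have "(v - f) q = 0" for q
      using on_basis off_basis
      by (cases "q \<in> coords D"; cases "q \<in> basis_points D") (auto simp: vecs_def)
    then have "v - f = 0" by (intro ext) (simp only: zero_fun_def)
    then have "v = f" by simp
    then show "v \<in> RM1p D" using f by simp
  qed
qed

lemma Min_weight_RM1p_nonconstant:
  assumes D: "2 \<le> D"
  shows "Min (weight (coords D) ` (RM1p D - {0, ones_vect D})) = 2 ^ (D - 1) - 1"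
proof (rule Min_eqI)
  show "finite (weight (coords D) ` (RM1p D - {0, ones_vect D}))"
    by (rule finite_subset[of _ "{..card (coords D)}"]) (auto simp: weight_le_card)
next
  fix w assume "w \<in> weight (coords D) ` (RM1p D - {0, ones_vect D})"
  then obtain v where v: "v \<in> RM1p D" "v \<noteq> 0" "v \<noteq> ones_vect D" "w = weight (coords D) v"
    by auto
  obtain c0 c where vc: "v = affine_vect D c0 c" using v(1) RM1p_iff_affine by auto
  show "2 ^ (D - 1) - 1 \<le> w"
  proof (cases "\<exists>j<D. c j = 1")
    case True
    then obtain j where "j < D" "c j = 1" by auto
    then show ?thesis using weight_affine_vect[of j D c c0] v vc by auto
  next
    case False
    then have "v = scale_vect c0 (ones_vect D)"
      using bit_not_zero_iff by (auto simp: vc affine_vect_def lin_form_def evalv_def fun_eq_iff)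
    then show ?thesis using v by (cases c0) (auto simp: fun_eq_iff)
  qed
next
  define v where "v = affine_vect D 1 (\<lambda>i. if i = 0 then 1 else 0)"
  have v_apply: "v (basis_point D k) = (if k = 0 then 0 else 1)" if "k < D" for k
    using that D basis_point_coords[OF D, of k] lin_form_basis_point[OF D, of k]
    by (simp add: v_def affine_vect_def evalv_def)
  then have "v (basis_point D 1) \<noteq> 0" "v (basis_point D 0) \<noteq> ones_vect D (basis_point D 0)"
    using D basis_point_coords[OF D, of 0] by (auto simp: evalv_def)
  then have "v \<in> RM1p D - {0, ones_vect D}"
    using affine_vect_RM1p by (auto simp: v_def)
  moreover have "weight (coords D) v = 2 ^ (D - 1) - 1"
    using weight_affine_vect[of 0 D _ 1] D by (simp add: v_def)
  ultimately show "2 ^ (D - 1) - 1 \<in> weight (coords D) ` (RM1p D - {0, ones_vect D})"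
    by (metis image_eqI)
qed

lemma Min_weight_even_nondual:
  assumes D: "2 \<le> D"
  shows "Min (weight (coords D) ` ({v \<in> vecs (coords D). dot (coords D) (ones_vect D) v = 0}
            - dual (coords D) (RM1p D))) = 2"
proof (rule Min_eqI)
  show "finite (weight (coords D) ` ({v \<in> vecs (coords D). dot (coords D) (ones_vect D) v = 0}
      - dual (coords D) (RM1p D)))"
    by (rule finite_subset[of _ "{..card (coords D)}"]) (auto simp: weight_le_card)
next
  fix w assume "w \<in> weight (coords D) ` ({v \<in> vecs (coords D). dot (coords D) (ones_vect D) v = 0}
      - dual (coords D) (RM1p D))"
  then obtain v where v: "v \<in> vecs (coords D)" "dot (coords D) (ones_vect D) v = 0"
    "v \<notin> dual (coords D) (RM1p D)" "w = weight (coords D) v" by auto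
  define S where "S = {a \<in> coords D. v a \<noteq> 0}"
  have "w = card S" using v(4) by (simp add: weight_def S_def)
  moreover have "S \<noteq> {}"
  proof
    assume "S = {}"
    then have "v = 0" using v(1) by (auto simp: S_def vecs_def fun_eq_iff)
    then show False using v(3) vect.subspace_0[OF dual_subspace] by blast
  qed
  moreover have "card S \<noteq> 1"
  proof
    assume "card S = 1"
    then obtain p where "S = {p}" by (rule card_1_singletonE)
    moreover have "(\<Sum>a\<in>coords D. v a) = (\<Sum>a\<in>S. v a)"
      by (rule sum.mono_neutral_right) (auto simp: S_def)
    ultimately have "(\<Sum>a\<in>coords D. v a) = 1" by (auto simp: S_def)
    then show False using v(2) by (simp add: dot_evalv)
  qed
  moreover have "finite S" by (simp add: S_def)
  ultimately show "2 \<le> w"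
    by (metis One_nat_def card_0_eq less_2_cases not_less)
next
  define e where "e = unit_vect (basis_point D 0) + unit_vect (basis_point D 1)"
  have b0: "basis_point D 0 \<in> coords D" and b1: "basis_point D 1 \<in> coords D"
    using basis_point_coords[OF D] D by auto
  have ne: "basis_point D 0 \<noteq> basis_point D 1"
    using inj_on_basis_point[OF D] D by (auto dest: inj_onD)
  have "e \<in> vecs (coords D)"
    unfolding e_def by (intro vect.subspace_add[OF vecs_subspace] unit_vect_vecs b0 b1)
  moreover have "dot (coords D) (ones_vect D) e = 0"
    using b0 b1 by (simp add: e_def dot_add_right dot_unit_vect evalv_def)
  moreover have "dot (coords D) (coord_vect D 0) e \<noteq> 0"
    using b0 b1 D by (simp add: e_def dot_add_right dot_unit_vect evalv_def basis_point_nth)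
  then have "e \<notin> dual (coords D) (RM1p D)"
    using D by (auto simp: mem_dual_RM1p_iff)
  moreover have "{a \<in> coords D. e a \<noteq> 0} = {basis_point D 0, basis_point D 1}"
    using b0 b1 ne by (auto simp: e_def unit_vect_def)
  then have "weight (coords D) e = 2"
    using ne by (simp add: weight_def)
  ultimately show "2 \<in> weight (coords D) ` ({v \<in> vecs (coords D). dot (coords D) (ones_vect D) v = 0}
      - dual (coords D) (RM1p D))" by force
qed

subsection \<open>Transvections and logical operators\<close>

text \<open>On these four basis points \<open>x\<^sub>a\<close> sums to \<open>[a = b]\<close>, and \<open>1\<close> sums to \<open>0\<close>.\<close>

definition logical_Z :: "nat \<Rightarrow> nat \<Rightarrow> bit list vect" where
  "logical_Z D b = unit_vect (basis_point D b) + unit_vect (basis_point D D)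
     + unit_vect (basis_point D 0) + unit_vect (basis_point D 1)"

lemma dot_logical_Z:
  assumes "2 \<le> D" "b \<le> D"
  shows "dot (coords D) u (logical_Z D b)
    = u (basis_point D b) + u (basis_point D D) + u (basis_point D 0) + u (basis_point D 1)"
  unfolding logical_Z_def dot_add_right using basis_point_coords assms by (simp add: dot_unit_vect)

lemma logical_Z_vecs: "2 \<le> D \<Longrightarrow> b \<le> D \<Longrightarrow> logical_Z D b \<in> vecs (coords D)"
  unfolding logical_Z_def
  by (intro vect.subspace_add[OF vecs_subspace] unit_vect_vecs basis_point_coords) auto

lemma dot_ones_logical_Z: "2 \<le> D \<Longrightarrow> b \<le> D \<Longrightarrow> dot (coords D) (ones_vect D) (logical_Z D b) = 0"
  using basis_point_coords by (simp add: dot_logical_Z evalv_def)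

lemma dot_coord_logical_Z:
  assumes "2 \<le> D" "a < D" "b < D"
  shows "dot (coords D) (coord_vect D a) (logical_Z D b) = idm a b"
  using assms basis_point_coords[OF assms(1)]
  by (cases "a = 0"; cases "a = 1") (simp_all add: dot_logical_Z evalv_def basis_point_nth idm_def)

definition transvection :: "nat \<Rightarrow> nat \<Rightarrow> bit list \<Rightarrow> bit list" where
  "transvection a b x = x[a := x ! a + x ! b]"

lemma involution_on_transvection:
  assumes "a \<noteq> b" "a < D" "b < D"
  shows "involution_on (coords D) (transvection a b)"
proof
  have involutive: "transvection a b (transvection a b x) = x" if "length x = D" for x
    using assms that by (simp add: transvection_def add.assoc)
  have "replicate D 0 ! a + replicate D 0 ! b = replicate D (0::bit) ! a"
    using assms by simp
  then have "transvection a b (replicate D 0) = replicate D 0"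
    unfolding transvection_def by (simp only: list_update_id)
  fix x assume x: "x \<in> coords D"
  then show "transvection a b (transvection a b x) = x"
    using involutive by (simp add: coords_def)
  have "transvection a b x \<noteq> replicate D 0"
  proof
    assume "transvection a b x = replicate D 0"
    then have "x = replicate D 0"
      using x involutive[of x] \<open>transvection a b (replicate D 0) = replicate D 0\<close>
      by (simp add: coords_def)
    then show False using x by (simp add: coords_def)
  qed
  then show "transvection a b x \<in> coords D"
    using x by (simp add: coords_def transvection_def)
qed

lemma permute_evalv:
  "(\<And>x. x \<in> coords D \<Longrightarrow> s x \<in> coords D) \<Longrightarrow> permute (coords D) s (evalv D f) = evalv D (f \<circ> s)"
  by (auto simp: permute_def evalv_def fun_eq_iff)

definition cnot_matrix :: "nat \<Rightarrow> nat \<Rightarrow> nat \<Rightarrow> nat \<Rightarrow> bit" where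
  "cnot_matrix a b = (\<lambda>i j. idm i j + (if i = a \<and> j = b then 1 else 0))"

lemma sum_cnot_matrix:
  assumes "c < k" "b < k"
  shows "(\<Sum>d<k. cnot_matrix a b c d * f d) = f c + (if c = a then f b else 0)"
proof -
  have "(\<Sum>d<k. cnot_matrix a b c d * f d)
      = (\<Sum>d<k. if d = c then f d else 0) + (\<Sum>d<k. if d = b then (if c = a then f d else 0) else 0)"
    unfolding sum.distrib[symmetric] by (intro sum.cong) (auto simp: cnot_matrix_def idm_def)
  then show ?thesis using assms by simp
qed

lemma cnot_matrix_square:
  "a \<noteq> b \<Longrightarrow> b < k \<Longrightarrow> c < k \<Longrightarrow> e < k \<Longrightarrow> (\<Sum>d<k. cnot_matrix a b c d * cnot_matrix a b d e) = idm c e"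
  by (simp add: sum_cnot_matrix[where f = "\<lambda>d. cnot_matrix a b d e"]) (auto simp: cnot_matrix_def idm_def)

lemma matrows_eq_sum: "matrows k M L c = (\<Sum>d<k. scale_vect (M c d) (L d))"
  by (simp add: matrows_def fun_eq_iff sum_apply)

lemma dot_matrows: "dot I u (matrows k M L c) = (\<Sum>d<k. M c d * dot I u (L d))"
  by (simp add: matrows_eq_sum dot_sum_right dot_scale_right)

lemma sum_idm: "e < k \<Longrightarrow> (\<Sum>d<k. g d * idm e d) = (g e :: bit)"
  by (simp add: idm_def if_distrib[of "(*) _"] cong: if_cong)

context
  fixes a b D :: nat
  assumes ab: "a \<noteq> b" "a < D" "b < D"
begin

interpretation involution_on "coords D" "transvection a b"
  by (rule involution_on_transvection[OF ab])

lemma permute_ones_vect: "permute (coords D) (transvection a b) (ones_vect D) = ones_vect D"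
  using permute_evalv[of D "transvection a b", OF maps_to] by (simp add: comp_def)

lemma permute_coord_vect:
  assumes "i < D"
  shows "permute (coords D) (transvection a b) (coord_vect D i)
    = coord_vect D i + (if i = a then coord_vect D b else 0)"
  using permute_evalv[of D "transvection a b", OF maps_to, where f = "\<lambda>x. x ! i"] ab assms
  by (auto simp: fun_eq_iff evalv_def transvection_def coords_def nth_list_update)

lemma permute_RM1p: "v \<in> RM1p D \<Longrightarrow> permute (coords D) (transvection a b) v \<in> RM1p D"
proof -
  let ?p = "permute (coords D) (transvection a b)"
  let ?G = "insert (ones_vect D) (coord_vect D ` {..<D})"
  have subspace: "vect.subspace (RM1p D)"
    by (simp add: RM1p_eq_vect_span)
  have "?p g \<in> RM1p D" if "g \<in> ?G" for g
    using that ab permute_ones_vect permute_coord_vect ones_vect_RM1p coord_vect_RM1p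
      vect.subspace_add[OF subspace] vect.subspace_0[OF subspace] by auto
  then have "vect.span (?p ` ?G) \<subseteq> RM1p D"
    by (intro vect.span_minimal subspace) auto
  moreover assume "v \<in> RM1p D"
  then have "?p v \<in> vect.span (?p ` ?G)"
    by (intro permute_vect_span) (simp add: RM1p_eq_vect_span)
  ultimately show ?thesis by blast
qed

lemma matrows_cnot_coord_vect:
  "c < D \<Longrightarrow> matrows D (cnot_matrix a b) (coord_vect D) c = permute (coords D) (transvection a b) (coord_vect D c)"
  using ab by (simp add: fun_eq_iff matrows_def sum_cnot_matrix permute_coord_vect)

lemma permute_logical_Z:
  assumes D: "2 \<le> D" and c: "c < D"
  shows "permute (coords D) (transvection a b) (logical_Z D c)
    - matrows D (\<lambda>i j. cnot_matrix a b j i) (logical_Z D) c \<in> dual (coords D) (RM1p D)"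
  unfolding mem_dual_RM1p_iff
proof (intro conjI allI impI)
  show "permute (coords D) (transvection a b) (logical_Z D c)
    - matrows D (\<lambda>i j. cnot_matrix a b j i) (logical_Z D) c \<in> vecs (coords D)"
    unfolding matrows_eq_sum using D c
    by (intro vect.subspace_diff[OF vecs_subspace] vect.subspace_sum[OF vecs_subspace]
        vect.subspace_scale[OF vecs_subspace] permute_vecs logical_Z_vecs) auto
next
  have "dot (coords D) (ones_vect D) (permute (coords D) (transvection a b) (logical_Z D c)) = 0"
    using D c by (simp add: dot_permute[symmetric] permute_ones_vect dot_ones_logical_Z)
  moreover have "dot (coords D) (ones_vect D) (matrows D (\<lambda>i j. cnot_matrix a b j i) (logical_Z D) c) = 0"
    using D by (simp add: dot_matrows dot_ones_logical_Z)
  ultimately show "dot (coords D) (ones_vect D) (permute (coords D) (transvection a b) (logical_Z D c)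
    - matrows D (\<lambda>i j. cnot_matrix a b j i) (logical_Z D) c) = 0"
    by (simp add: dot_diff_right)
next
  fix e assume e: "e < D"
  have "dot (coords D) (coord_vect D e) (permute (coords D) (transvection a b) (logical_Z D c))
      = idm e c + (if e = a then idm b c else 0)"
    using D ab c e
    by (simp add: dot_permute[symmetric] permute_coord_vect dot_add_left dot_coord_logical_Z)
  moreover have "dot (coords D) (coord_vect D e) (matrows D (\<lambda>i j. cnot_matrix a b j i) (logical_Z D) c)
      = cnot_matrix a b e c"
    using D c e by (simp add: dot_matrows dot_coord_logical_Z sum_idm)
  ultimately show "dot (coords D) (coord_vect D e) (permute (coords D) (transvection a b) (logical_Z D c)
    - matrows D (\<lambda>i j. cnot_matrix a b j i) (logical_Z D) c) = 0"
    using ab by (auto simp: dot_diff_right cnot_matrix_def idm_def)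
qed

end

section \<open>The quantum code\<close>

context
  fixes D mZ :: nat and HZ :: "nat \<Rightarrow> bit list vect"
  assumes D: "2 \<le> D" and rowsp_HZ: "rowsp mZ HZ = dual (coords D) (RM1p D)"
begin

lemma ker_HZ: "ker (coords D) mZ HZ = RM1p D"
  by (simp add: ker_eq_dual_rowsp rowsp_HZ dual_dual_RM1p[OF D])

lemma css_RM1p: "css (coords D) 1 (\<lambda>_. ones_vect D) mZ HZ"
  using rowsp_member[of _ mZ HZ] ones_vect_RM1p
  by (auto simp: css_def rowsp_HZ dual_def)

lemma css_k_RM1p: "css_k (coords D) 1 (\<lambda>_. ones_vect D) mZ HZ = D"
proof -
  have "ones_vect D (basis_point D 0) = 1"
    using basis_point_coords[OF D] by (simp add: evalv_def)
  then have "rank 1 (\<lambda>_. ones_vect D) = 1"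
    by (intro rank_single) auto
  moreover have "D + 1 \<le> card (coords D)"
    using card_mono[OF finite_coords basis_points_subset[OF D]] card_basis_points[OF D] by simp
  ultimately show ?thesis
    by (simp add: css_k_def rank_eq_vect_dim rowsp_HZ dim_dual_RM1p[OF D])
qed

lemma css_dX_RM1p: "css_dX (coords D) 1 (\<lambda>_. ones_vect D) mZ HZ = 2 ^ (D - 1) - 1"
  unfolding css_dX_def ker_HZ rowsp_single by (rule Min_weight_RM1p_nonconstant[OF D])

lemma css_dZ_RM1p: "css_dZ (coords D) 1 (\<lambda>_. ones_vect D) mZ HZ = 2"
  unfolding css_dZ_def ker_single rowsp_HZ by (rule Min_weight_even_nondual[OF D])

lemma css_basis_RM1p: "css_basis (coords D) 1 (\<lambda>_. ones_vect D) mZ HZ D (coord_vect D) (logical_Z D)"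
  unfolding css_basis_def ker_HZ ker_single
  using D by (auto simp: coord_vect_RM1p logical_Z_vecs
      dot_ones_logical_Z dot_coord_logical_Z idm_def)

lemma implements_cnot:
  assumes ab: "a \<noteq> b" "a < D" "b < D"
  shows "implements (coords D) 1 (\<lambda>_. ones_vect D) mZ HZ D (coord_vect D) (logical_Z D)
    (transvection a b) (cnot_matrix a b)"
proof -
  interpret involution_on "coords D" "transvection a b"
    by (rule involution_on_transvection[OF ab])
  have "rowsp mZ HZ \<subseteq> vecs (coords D)"
    by (auto simp: rowsp_HZ dual_def)
  moreover have "permute (coords D) (transvection a b) v \<in> rowsp mZ HZ" if "v \<in> rowsp mZ HZ" for v
    using permute_dual[OF permute_RM1p[OF ab]] that by (simp add: rowsp_HZ)
  ultimately have "rowsp mZ (\<lambda>i. permute (coords D) (transvection a b) (HZ i)) = rowsp mZ HZ"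
    by (rule rowsp_permute)
  then show ?thesis
    unfolding implements_def using bij ab D
    by (intro conjI exI[of _ "cnot_matrix a b"])
      (auto simp: cnot_matrix_square permute_ones_vect rowsp_single matrows_cnot_coord_vect
        rowsp_HZ permute_logical_Z)
qed

lemma phantom_RM1p: "phantom (coords D) 1 (\<lambda>_. ones_vect D) mZ HZ"
  using css_basis_RM1p implements_cnot
  unfolding phantom_def css_k_RM1p cnot_matrix_def Let_def by blast

end

theorem mainTheorem13:
  fixes D mZ :: nat and HZ :: "nat \<Rightarrow> bit list vect"
  assumes "D \<ge> 3"
    and "rowsp mZ HZ = dual (coords D) (RM1p D)"
  shows "css (coords D) 1 (\<lambda>_. evalv D (\<lambda>_. 1)) mZ HZ
       \<and> css_k (coords D) 1 (\<lambda>_. evalv D (\<lambda>_. 1)) mZ HZ = D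
       \<and> css_dX (coords D) 1 (\<lambda>_. evalv D (\<lambda>_. 1)) mZ HZ = 2 ^ (D - 1) - 1
       \<and> css_dZ (coords D) 1 (\<lambda>_. evalv D (\<lambda>_. 1)) mZ HZ = 2
       \<and> phantom (coords D) 1 (\<lambda>_. evalv D (\<lambda>_. 1)) mZ HZ"
proof -
  have "2 \<le> D" using assms(1) by simp
  then show ?thesis
    using css_RM1p css_k_RM1p css_dX_RM1p css_dZ_RM1p phantom_RM1p assms(2) by blast
qed

end
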